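(* For each $t$, \[ \mathbb{E}\Big[\sum_{n<t}\bar L_n(x_{n+1},y_{n+1})-\min_{x\in\mathcal{X}}\max_{y\in\mathcal{Y}}\sum_{n<t}\bar L_n(x,y)\Big]\ge -G\sum_{n<t}\mathbb{E}\|x_n-x_{n+1}\|_1-G\sum_{n<t}\mathbb{E}\|y'_n-y_{n+1}\|_1-2T^{2/3}(\log d+1)x_{\max}, \] and \[ \mathbb{E}\Big[\sum_{n<t}\bar L_n(x_{n+1},y_{n+1})-\min_{x\in\mathcal{X}}\max_{y\in\mathcal{Y}}\sum_{n<t}\bar L_n(x,y)\Big]\le G\sum_{n<t}\mathbb{E}\|y''_n-y_{n+1}\|_1+2T^{2/3}(\log d+1)x_{\max}. \]
   Context: Let $\mathcal{X}\subseteq\mathbb{R}^d$ be compact, $x_{\max}:=\max_{x\in\mathcal{X}}\|x\|_1$. For $t=1,\dots,T$, $f_t,c_{it}:\mathcal{X}\to\mathbb{R}$ ($i=1,\dots,I$) are $G_0$-Lipschitz w.r.t. $\ell_1$, $b_i\ge0$, and for $y=(\gamma_1,\dots,\gamma_I)$, $L_t(x,y)=f_t(x)+\sum_i\gamma_i[c_{it}(x)-b_i]$. Fix $\lambda>0$, $y_{\max}>0$, $\mathcal{Y}=[0,y_{\max}]^I$, and $\bar L_n(x,y)=L_n(x,y)+\frac{\lambda}{n^{1/9}}\sum_i\log(\gamma_i+1)$. $G>0$ is a constant such that for all $n$, $\bar L_n$ is $G$-Lipschitz in $x$ (for fixed $y\in\mathcal{Y}$) and in $y$ (for fixed $x\in\mathcal{X}$)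 with respect to $\ell_1$-norms. A global minimax point of $h$ on $\mathcal{X}\times\mathcal{Y}$ is $(x^*,y^* )$ with $h(x^*,y)\le h(x^*,y^* )\le\max_{y'\in\mathcal{Y}}h(x,y')$ for all $x,y$. Algorithm (FTDPL with $M=1$): $\eta=T^{-2/3}$; at each period $t$, draw $\theta_t\in\mathbb{R}^d$ with i.i.d. coordinates exponentially distributed with parameter $\eta$, independent across $t$, and let $(x_t,y_t)$ be a global minimax point of $(x,y)\mapsto\sum_{n<t}\bar L_n(x,y)-\theta_t^\top x$ on $\mathcal{X}\times\mathcal{Y}$. Define $y'_t=\arg\max_{y\in\mathcal{Y}}\{\sum_{n<t+1}\bar L_n(x_t,y)-\theta_{t+1}^\top x_t\}$ and $y''_t=\arg\max_{y\in\mathcal{Y}}\{\sum_{n<t}\bar L_n(x_{t+1},y)-\theta_t^\top x_{t+1}\}$. Expectations are over the $\theta$'s. *)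

theory Defs
  imports "HOL-Analysis.Analysis" "HOL-Probability.Probability"
begin

definition l1norm :: "real ^ 'n::finite \<Rightarrow> real" where
  "l1norm v = (\<Sum>i\<in>UNIV. \<bar>v $ i\<bar>)"

definition Ybox :: "real \<Rightarrow> (real ^ 'i::finite) set" where
  "Ybox ymax = {y. \<forall>i. 0 \<le> y $ i \<and> y $ i \<le> ymax}"

definition Lag :: "(nat \<Rightarrow> real^'d::finite \<Rightarrow> real) \<Rightarrow> (nat \<Rightarrow> 'i::finite \<Rightarrow> real^'d \<Rightarrow> real)
    \<Rightarrow> ('i \<Rightarrow> real) \<Rightarrow> nat \<Rightarrow> real^'d \<Rightarrow> real^'i \<Rightarrow> real" where
  "Lag f c b n x y = f n x + (\<Sum>i\<in>UNIV. y $ i * (c n i x - b i))"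

definition Lbar :: "(nat \<Rightarrow> real^'d::finite \<Rightarrow> real) \<Rightarrow> (nat \<Rightarrow> 'i::finite \<Rightarrow> real^'d \<Rightarrow> real)
    \<Rightarrow> ('i \<Rightarrow> real) \<Rightarrow> real \<Rightarrow> nat \<Rightarrow> real^'d \<Rightarrow> real^'i \<Rightarrow> real" where
  "Lbar f c b lam n x y = Lag f c b n x y + lam / (real n powr (1/9)) * (\<Sum>i\<in>UNIV. ln (y $ i + 1))"

definition is_global_minimax :: "('a \<Rightarrow> 'b \<Rightarrow> real) \<Rightarrow> 'a set \<Rightarrow> 'b set \<Rightarrow> 'a \<Rightarrow> 'b \<Rightarrow> bool" where
  "is_global_minimax h X Y xs ys \<longleftrightarrow> xs \<in> X \<and> ys \<in> Y \<and>
     (\<forall>x\<in>X. \<forall>y\<in>Y. h xs y \<le> h xs ys \<and> h xs ys \<le> (SUP y'\<in>Y. h x y'))"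

definition is_argmax_on :: "('b \<Rightarrow> real) \<Rightarrow> 'b set \<Rightarrow> 'b \<Rightarrow> bool" where
  "is_argmax_on g Y z \<longleftrightarrow> z \<in> Y \<and> (\<forall>y\<in>Y. g y \<le> g z)"

end

theory Submission
  imports Defs
begin

(* Let Phi_s(u) (leader_value s u) be the value of the game  sum_{1 <= n < s} Lbar_n(x, y) - <u, x>
   at its global minimax point (x_s(u), y_s(u)).  Going from s = n to s = n + 1 adds Lbar_n to the
   game, and comparing the two minimax points shows that the value grows by at least
   Lbar_n(x_{n+1}(u), y'') and at most Lbar_n(x_n(u), y'), where y'' and y' are best responses to
   x_{n+1}(u) and x_n(u).  The Lipschitz bounds relate both to Lbar_n(x_{n+1}, y_{n+1}) up to the
   movement terms.  As theta_n and theta_{n+1} have the same law, the expected increments telescope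
   to E[Phi_t(theta) - Phi_1(theta)], which is within 2 x_max E max_i theta_i of the unperturbed
   minimax value; finally E max_i theta_i <= a + sum_i E (theta_i - a)_+ = (ln d + 1) / eta
   for a = ln d / eta. *)

lemma l1norm_nonneg: "0 \<le> l1norm v"
  unfolding l1norm_def by (simp add: sum_nonneg)

lemma l1norm_minus_commute: "l1norm (a - b) = l1norm (b - a)"
  unfolding l1norm_def by (simp add: abs_minus_commute)

lemma l1norm_le_card_norm: "l1norm (v::real^'n) \<le> CARD('n) * norm v"
proof -
  have "l1norm v \<le> (\<Sum>i\<in>(UNIV::'n set). norm v)"
    unfolding l1norm_def by (intro sum_mono) (metis component_le_norm_cart real_norm_def)
  then show ?thesis by simp
qed

lemma continuous_on_l1norm [continuous_intros]:
  "continuous_on S f \<Longrightarrow> continuous_on S (\<lambda>x. l1norm (f x))"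
  unfolding l1norm_def by (intro continuous_intros)

lemma abs_inner_le_l1norm:
  assumes "\<And>i. \<bar>u $ i\<bar> \<le> r"
  shows "\<bar>inner u x\<bar> \<le> r * l1norm x"
proof -
  have "\<bar>inner u x\<bar> \<le> (\<Sum>i\<in>UNIV. \<bar>u $ i * x $ i\<bar>)"
    unfolding inner_vec_def inner_real_def by (rule sum_abs)
  also have "\<dots> \<le> (\<Sum>i\<in>UNIV. r * \<bar>x $ i\<bar>)"
    unfolding abs_mult by (intro sum_mono mult_right_mono assms) simp
  finally show ?thesis by (simp add: l1norm_def sum_distrib_left)
qed

lemma compact_Ybox: "compact (Ybox ymax)"
proof -
  have "Ybox ymax = cbox 0 (\<chi> i. ymax)"
    unfolding Ybox_def by (auto simp: mem_box_cart)
  then show ?thesis using compact_cbox by metis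
qed

lemma separately_lipschitz_continuous_on:
  fixes \<phi> :: "real^'a \<Rightarrow> real^'b \<Rightarrow> real"
  assumes lip_x: "\<And>x x' y. x \<in> A \<Longrightarrow> x' \<in> A \<Longrightarrow> y \<in> B \<Longrightarrow>
      \<bar>\<phi> x y - \<phi> x' y\<bar> \<le> G * l1norm (x - x')"
    and lip_y: "\<And>x y y'. x \<in> A \<Longrightarrow> y \<in> B \<Longrightarrow> y' \<in> B \<Longrightarrow>
      \<bar>\<phi> x y - \<phi> x y'\<bar> \<le> G * l1norm (y - y')"
    and "0 \<le> G"
  shows "continuous_on (A \<times> B) (\<lambda>p. \<phi> (fst p) (snd p))"
proof (rule lipschitz_on_continuous_on)
  show "(G * (CARD('a) + CARD('b)))-lipschitz_on (A \<times> B) (\<lambda>p. \<phi> (fst p) (snd p))"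
  proof (rule lipschitz_onI)
    fix p p' assume "p \<in> A \<times> B" "p' \<in> A \<times> B"
    then obtain x y x' y' where p: "p = (x, y)" "p' = (x', y')" and in_AB: "x \<in> A" "y \<in> B" "x' \<in> A" "y' \<in> B"
      by auto
    have "\<bar>\<phi> x y - \<phi> x' y'\<bar> \<le> G * l1norm (x - x') + G * l1norm (y - y')"
      using lip_x[of x x' y] lip_y[of x' y y'] in_AB by linarith
    also have "\<dots> \<le> G * (CARD('a) * norm (x - x')) + G * (CARD('b) * norm (y - y'))"
      using l1norm_le_card_norm[of "x - x'"] l1norm_le_card_norm[of "y - y'"] \<open>0 \<le> G\<close>
      by (intro add_mono mult_left_mono) auto
    also have "\<dots> \<le> G * (CARD('a) * dist p p') + G * (CARD('b) * dist p p')"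
      using dist_fst_le[of p p'] dist_snd_le[of p p'] \<open>0 \<le> G\<close>
      by (intro add_mono mult_left_mono) (auto simp: p dist_norm)
    finally show "dist (\<phi> (fst p) (snd p)) (\<phi> (fst p') (snd p')) \<le> G * (CARD('a) + CARD('b)) * dist p p'"
      by (simp add: p dist_real_def algebra_simps)
  qed (use \<open>0 \<le> G\<close> in auto)
qed

lemma is_argmax_on_diff_const: "is_argmax_on (\<lambda>y. g y - c) Y z \<longleftrightarrow> is_argmax_on g Y z"
  unfolding is_argmax_on_def by auto

lemma global_minimax_value_le:
  assumes "is_global_minimax h X Y xs ys" "x \<in> X" "is_argmax_on (h x) Y y"
  shows "h xs ys \<le> h x y"
proof -
  have "(SUP y'\<in>Y. h x y') = h x y"
    using assms(3) unfolding is_argmax_on_def by (intro cSup_eq_maximum) auto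
  then show ?thesis
    using assms(1,2) unfolding is_global_minimax_def by auto
qed

lemma global_minimax_value_ge:
  "is_global_minimax h X Y xs ys \<Longrightarrow> y \<in> Y \<Longrightarrow> h xs y \<le> h xs ys"
  unfolding is_global_minimax_def by auto

lemma global_minimax_value_increment:
  assumes g: "is_global_minimax g X Y x1 y1"
    and h: "is_global_minimax (\<lambda>x y. g x y + l x y) X Y x2 y2"
  shows "is_argmax_on (g x2) Y y \<Longrightarrow> l x2 y \<le> (g x2 y2 + l x2 y2) - g x1 y1"
    and "is_argmax_on (\<lambda>y. g x1 y + l x1 y) Y y \<Longrightarrow> (g x2 y2 + l x2 y2) - g x1 y1 \<le> l x1 y"
proof -
  have "x1 \<in> X" "x2 \<in> X"
    using g h unfolding is_global_minimax_def by auto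
  show "l x2 y \<le> (g x2 y2 + l x2 y2) - g x1 y1" if "is_argmax_on (g x2) Y y"
    using global_minimax_value_le[OF g \<open>x2 \<in> X\<close> that] global_minimax_value_ge[OF h, of y] that
    unfolding is_argmax_on_def by auto
  show "(g x2 y2 + l x2 y2) - g x1 y1 \<le> l x1 y" if "is_argmax_on (\<lambda>y. g x1 y + l x1 y) Y y"
    using global_minimax_value_le[OF h \<open>x1 \<in> X\<close> that] global_minimax_value_ge[OF g, of y] that
    unfolding is_argmax_on_def by auto
qed

lemma global_minimax_value_approx:
  assumes mm: "is_global_minimax h X Y xs ys"
    and bdd: "\<And>x. x \<in> X \<Longrightarrow> bdd_above (F x ` Y)"
    and close: "\<And>x y. x \<in> X \<Longrightarrow> y \<in> Y \<Longrightarrow> \<bar>h x y - F x y\<bar> \<le> \<delta>"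
  shows "\<bar>h xs ys - (INF x\<in>X. SUP y\<in>Y. F x y)\<bar> \<le> \<delta>"
proof -
  have xs: "xs \<in> X" and ys: "ys \<in> Y"
    using mm unfolding is_global_minimax_def by auto
  have below: "h xs ys - \<delta> \<le> (SUP y\<in>Y. F x y)" if x: "x \<in> X" for x
  proof -
    have "(SUP y\<in>Y. h x y) \<le> (SUP y\<in>Y. F x y) + \<delta>"
    proof (rule cSUP_least)
      fix y assume "y \<in> Y"
      then show "h x y \<le> (SUP y\<in>Y. F x y) + \<delta>"
        using close[OF x, of y] cSUP_upper[OF _ bdd[OF x], of y] by linarith
    qed (use ys in auto)
    then show ?thesis
      using mm x ys unfolding is_global_minimax_def by fastforce
  qed
  have "h xs ys - \<delta> \<le> (INF x\<in>X. SUP y\<in>Y. F x y)"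
    using xs below by (intro cINF_greatest) auto
  moreover have "(INF x\<in>X. SUP y\<in>Y. F x y) \<le> h xs ys + \<delta>"
  proof -
    have "(INF x\<in>X. SUP y\<in>Y. F x y) \<le> (SUP y\<in>Y. F xs y)"
      using below by (intro cINF_lower[OF _ xs] bdd_belowI2[where m = "h xs ys - \<delta>"])
    also have "\<dots> \<le> h xs ys + \<delta>"
    proof (rule cSUP_least)
      fix y assume "y \<in> Y"
      then show "F xs y \<le> h xs ys + \<delta>"
        using close[OF xs] global_minimax_value_ge[OF mm] by fastforce
    qed (use ys in auto)
    finally show ?thesis .
  qed
  ultimately show ?thesis by linarith
qed

lemma borel_measurable_vec:
  assumes "\<And>i. (\<lambda>\<omega>. F \<omega> $ i) \<in> borel_measurable M"
  shows "(F :: 'a \<Rightarrow> real^'n) \<in> borel_measurable M"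
proof (rule borel_measurable_euclidean_space[THEN iffD2], intro ballI)
  fix b :: "real^'n" assume "b \<in> Basis"
  then obtain i where "b = axis i 1"
    unfolding Basis_vec_def by auto
  then show "(\<lambda>\<omega>. F \<omega> \<bullet> b) \<in> borel_measurable M"
    by (simp add: inner_axis assms)
qed

lemma borel_measurable_continuous_on_comp:
  fixes \<phi> :: "'a::topological_space \<Rightarrow> real"
  assumes "continuous_on S \<phi>" "g \<in> borel_measurable M" "\<And>\<omega>. \<omega> \<in> space M \<Longrightarrow> g \<omega> \<in> S"
  shows "(\<lambda>\<omega>. \<phi> (g \<omega>)) \<in> borel_measurable M"
  by (rule measurable_compose[where N = "restrict_space borel S"])
     (use assms in \<open>auto intro!: borel_measurable_continuous_on_restrict measurable_restrict_space2\<close>)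

lemma (in finite_measure) integrable_continuous_on_comp:
  fixes \<phi> :: "'b::metric_space \<Rightarrow> real"
  assumes "compact S" "continuous_on S \<phi>"
    and "g \<in> borel_measurable M" "\<And>\<omega>. \<omega> \<in> space M \<Longrightarrow> g \<omega> \<in> S"
  shows "integrable M (\<lambda>\<omega>. \<phi> (g \<omega>))"
proof -
  have "bounded (\<phi> ` S)"
    using assms by (intro compact_imp_bounded compact_continuous_image)
  then obtain K where "\<And>x. x \<in> S \<Longrightarrow> norm (\<phi> x) \<le> K"
    by (auto simp: bounded_iff)
  then show ?thesis
    using assms borel_measurable_continuous_on_comp[of S \<phi> g M]
    by (intro integrable_const_bound[where B = K]) auto
qed

lemma (in finite_measure) integrable_l1norm_diff:
  assumes "compact S" "g \<in> borel_measurable M" "h \<in> borel_measurable M"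
    and "\<And>\<omega>. g \<omega> \<in> S" "\<And>\<omega>. h \<omega> \<in> S"
  shows "integrable M (\<lambda>\<omega>. l1norm (g \<omega> - h \<omega>))"
proof -
  have "integrable M (\<lambda>\<omega>. (\<lambda>p. l1norm (fst p - snd p)) (g \<omega>, h \<omega>))"
    using assms by (intro integrable_continuous_on_comp[of "S \<times> S"] compact_Times
      continuous_intros borel_measurable_Pair) auto
  then show ?thesis by simp
qed

lemma (in prob_space) indep_vars_reindex:
  fixes h :: "'j \<Rightarrow> 'k"
  assumes h: "inj h" and ind: "indep_vars M' X (range h)"
  shows "indep_vars (\<lambda>i. M' (h i)) (\<lambda>i. X (h i)) UNIV"
proof -
  have rv: "\<forall>i\<in>range h. random_variable (M' i) (X i)"
    and ind_sets: "indep_sets (\<lambda>i. {X i -` A \<inter> space M |A. A \<in> sets (M' i)}) (range h)"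
    using ind unfolding indep_vars_def2 by auto
  show ?thesis unfolding indep_vars_def2
  proof (intro conjI)
    show "\<forall>i\<in>UNIV. random_variable (M' (h i)) (X (h i))" using rv by auto
    show "indep_sets (\<lambda>i. {X (h i) -` A \<inter> space M |A. A \<in> sets (M' (h i))}) UNIV"
      unfolding indep_sets_def
    proof (intro conjI allI impI ballI)
      fix i show "{X (h i) -` A \<inter> space M |A. A \<in> sets (M' (h i))} \<subseteq> events"
        using ind_sets unfolding indep_sets_def by auto
    next
      fix J :: "'j set" and A assume J: "J \<subseteq> UNIV" "J \<noteq> {}" "finite J"
        and A: "A \<in> (\<Pi> j\<in>J. {X (h j) -` A \<inter> space M |A. A \<in> sets (M' (h j))})"
      define A' where "A' = (\<lambda>j. A (inv h j))"
      have A': "A' \<in> (\<Pi> j\<in>h ` J. {X j -` A \<inter> space M |A. A \<in> sets (M' j)})"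
        using A by (auto simp: A'_def inv_f_f[OF h] Pi_def)
      have "prob (\<Inter>j\<in>h ` J. A' j) = (\<Prod>j\<in>h ` J. prob (A' j))"
        by (rule indep_setsD[OF ind_sets]) (use J A' in \<open>auto simp del: Int_iff\<close>)
      moreover have "(\<Inter>j\<in>h ` J. A' j) = (\<Inter>j\<in>J. A j)"
        by (auto simp: A'_def inv_f_f[OF h])
      moreover have "(\<Prod>j\<in>h ` J. prob (A' j)) = (\<Prod>j\<in>J. prob (A j))"
        using h by (subst prod.reindex) (auto simp: A'_def inv_f_f inj_on_def)
      ultimately show "prob (\<Inter>j\<in>J. A j) = (\<Prod>j\<in>J. prob (A j))" by simp
    qed
  qed
qed

lemma (in prob_space) integral_iid_vec_eq:
  fixes \<theta> :: "'s \<Rightarrow> 'a \<Rightarrow> real^'d" and g :: "real^'d \<Rightarrow> real"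
  assumes distr: "\<And>s i. distributed M lborel (\<lambda>\<omega>. \<theta> s \<omega> $ i) p"
    and indep: "indep_vars (\<lambda>_. borel) (\<lambda>(s, i) \<omega>. \<theta> s \<omega> $ i) UNIV"
    and g: "g \<in> borel_measurable borel"
  shows "(\<integral>\<omega>. g (\<theta> s \<omega>) \<partial>M) = (\<integral>\<omega>. g (\<theta> s' \<omega>) \<partial>M)"
proof -
  define D where "D = PiM (UNIV::'d set) (\<lambda>_. density lborel p)"
  have rv: "random_variable borel (\<lambda>\<omega>. \<theta> s \<omega> $ i)" for s i
    using distr[of s i] distributed_measurable by (metis measurable_lborel1)
  have g_vec: "(\<lambda>f. g (vec_lambda f)) \<in> borel_measurable (PiM (UNIV::'d set) (\<lambda>_. borel))"
    by (rule measurable_compose[OF borel_measurable_vec g]) simp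
  have "(\<integral>\<omega>. g (\<theta> s \<omega>) \<partial>M) = (\<integral>f. g (vec_lambda f) \<partial>D)" for s
  proof -
    have "indep_vars (\<lambda>_. borel) (\<lambda>(s, i) \<omega>. \<theta> s \<omega> $ i) (range (Pair s))"
      by (rule indep_vars_subset[OF indep]) simp
    from indep_vars_reindex[OF _ this]
    have "indep_vars (\<lambda>_. borel) (\<lambda>i \<omega>. \<theta> s \<omega> $ i) UNIV"
      by (simp add: inj_on_def)
    then have "distr M (PiM UNIV (\<lambda>_. borel)) (\<lambda>\<omega>. \<lambda>i\<in>UNIV. \<theta> s \<omega> $ i)
          = PiM UNIV (\<lambda>i. distr M borel (\<lambda>\<omega>. \<theta> s \<omega> $ i))"
      using indep_vars_iff_distr_eq_PiM[where I = UNIV and M' = "\<lambda>_. borel"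
          and X = "\<lambda>i \<omega>. \<theta> s \<omega> $ i"] rv
      by simp
    also have "\<dots> = D"
    proof -
      have "distr M borel (\<lambda>\<omega>. \<theta> s \<omega> $ i) = distr M lborel (\<lambda>\<omega>. \<theta> s \<omega> $ i)" for i
        by (rule distr_cong) auto
      then have "distr M borel (\<lambda>\<omega>. \<theta> s \<omega> $ i) = density lborel p" for i
        using distr[of s i] unfolding distributed_def by simp
      then show ?thesis by (simp add: D_def)
    qed
    finally have distr_eq: "distr M (PiM UNIV (\<lambda>_. borel)) (\<lambda>\<omega>. \<lambda>i\<in>UNIV. \<theta> s \<omega> $ i) = D" .
    have "(\<lambda>\<omega>. \<lambda>i\<in>UNIV. \<theta> s \<omega> $ i) \<in> measurable M (PiM UNIV (\<lambda>_. borel))"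
      by (rule measurable_restrict) (use rv in auto)
    from integral_distr[OF this g_vec] show ?thesis
      unfolding distr_eq by (simp add: restrict_UNIV vec_nth_inverse)
  qed
  then show ?thesis by simp
qed

lemma (in prob_space) exponential_distributed_excess:
  assumes D: "distributed M lborel Z (exponential_density l)"
    and l: "0 < l" and a: "0 \<le> a"
  shows "integrable M (\<lambda>\<omega>. max (\<bar>Z \<omega>\<bar> - a) 0)"
    and "(\<integral>\<omega>. max (\<bar>Z \<omega>\<bar> - a) 0 \<partial>M) = exp (- a * l) / l"
proof -
  have "integrable M Z"
    using erlang_ith_moment_integrable[OF l D, of 1] by simp
  then show "integrable M (\<lambda>\<omega>. max (\<bar>Z \<omega>\<bar> - a) 0)"
    by (rule Bochner_Integration.integrable_bound) (use distributed_measurable[OF D] a in auto)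
  have density_nonneg: "0 \<le> exponential_density l x" for x
    using exponential_density_nonneg[OF l] by simp
  have "(\<integral>\<omega>. max (\<bar>Z \<omega>\<bar> - a) 0 \<partial>M)
      = (\<integral>x. exponential_density l x * max (\<bar>x\<bar> - a) 0 \<partial>lborel)"
    by (rule distributed_integral[OF D, symmetric]) (auto simp: density_nonneg)
  also have "\<dots> = (\<integral>z. exponential_density l (a + z) * max (\<bar>a + z\<bar> - a) 0 \<partial>lborel)"
    using lborel_integral_real_affine[of 1 "\<lambda>x. exponential_density l x * max (\<bar>x\<bar> - a) 0" a] by simp
  also have "\<dots> = (\<integral>z. exp (- a * l) * (exponential_density l z * z) \<partial>lborel)"
    \<comment> \<open>memorylessness: the excess over a is again exponential, scaled by the tail mass exp (- a l)\<close>
  proof (rule Bochner_Integration.integral_cong[OF refl])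
    fix z :: real
    show "exponential_density l (a + z) * max (\<bar>a + z\<bar> - a) 0 = exp (- a * l) * (exponential_density l z * z)"
      using a by (cases "z < 0") (auto simp: exponential_density_def max_def algebra_simps exp_add[symmetric])
  qed
  also have "\<dots> = exp (- a * l) * (\<integral>z. exponential_density l z * z \<partial>lborel)"
    by simp
  also have "(\<integral>z. exponential_density l z * z \<partial>lborel) = (\<integral>\<omega>. Z \<omega> \<partial>M)"
    by (rule distributed_integral[OF D]) (auto simp: density_nonneg)
  also have "(\<integral>\<omega>. Z \<omega> \<partial>M) = 1 / l"
    using exponential_distributed_expectation[OF l D] by simp
  finally show "(\<integral>\<omega>. max (\<bar>Z \<omega>\<bar> - a) 0 \<partial>M) = exp (- a * l) / l" by simp
qed

definition sup_bound :: "real \<Rightarrow> real^'n \<Rightarrow> real" where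
  "sup_bound a u = a + (\<Sum>i\<in>UNIV. max (\<bar>u $ i\<bar> - a) 0)"

lemma abs_nth_le_sup_bound: "\<bar>u $ i\<bar> \<le> sup_bound a u"
proof -
  have "max (\<bar>u $ i\<bar> - a) 0 \<le> (\<Sum>i\<in>UNIV. max (\<bar>u $ i\<bar> - a) 0)"
    by (rule member_le_sum) auto
  then show ?thesis unfolding sup_bound_def by linarith
qed

lemma (in prob_space) exponential_sup_bound:
  fixes \<theta> :: "'a \<Rightarrow> real^'d" and \<eta> :: real
  defines "a \<equiv> ln CARD('d) / \<eta>"
  assumes D: "\<And>i. distributed M lborel (\<lambda>\<omega>. \<theta> \<omega> $ i) (exponential_density \<eta>)"
    and \<eta>: "0 < \<eta>"
  shows "integrable M (\<lambda>\<omega>. sup_bound a (\<theta> \<omega>))"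
    and "(\<integral>\<omega>. sup_bound a (\<theta> \<omega>) \<partial>M) = (ln CARD('d) + 1) / \<eta>"
proof -
  have a: "0 \<le> a" unfolding a_def using \<eta> by simp
  note excess = exponential_distributed_excess[OF D \<eta> a]
  show "integrable M (\<lambda>\<omega>. sup_bound a (\<theta> \<omega>))"
    unfolding sup_bound_def using excess(1) by auto
  have "exp (- a * \<eta>) = 1 / CARD('d)"
    unfolding a_def using \<eta> by (simp add: exp_minus inverse_eq_divide)
  then have "(\<integral>\<omega>. sup_bound a (\<theta> \<omega>) \<partial>M) = a + CARD('d) * (1 / CARD('d) / \<eta>)"
    unfolding sup_bound_def using excess by (simp add: prob_space)
  also have "\<dots> = (ln CARD('d) + 1) / \<eta>"
    by (simp add: a_def add_divide_distrib)
  finally show "(\<integral>\<omega>. sup_bound a (\<theta> \<omega>) \<partial>M) = (ln CARD('d) + 1) / \<eta>" .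
qed

locale perturbed_leader = prob_space M
  for M :: "'w measure" +
  fixes X :: "(real^'d::finite) set" and Y :: "(real^'i::finite) set"
    and L :: "nat \<Rightarrow> real^'d \<Rightarrow> real^'i \<Rightarrow> real" and G \<eta> :: real
    and \<theta> :: "nat \<Rightarrow> 'w \<Rightarrow> real^'d"
    and xs :: "nat \<Rightarrow> real^'d \<Rightarrow> real^'d" and ys :: "nat \<Rightarrow> real^'d \<Rightarrow> real^'i"
  assumes compact_X: "compact X" and compact_Y: "compact Y"
    and G_nonneg: "0 \<le> G"
    and lipschitz_x: "\<And>n x x' y. 1 \<le> n \<Longrightarrow> x \<in> X \<Longrightarrow> x' \<in> X \<Longrightarrow> y \<in> Y \<Longrightarrow>
      \<bar>L n x y - L n x' y\<bar> \<le> G * l1norm (x - x')"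
    and lipschitz_y: "\<And>n x y y'. 1 \<le> n \<Longrightarrow> x \<in> X \<Longrightarrow> y \<in> Y \<Longrightarrow> y' \<in> Y \<Longrightarrow>
      \<bar>L n x y - L n x y'\<bar> \<le> G * l1norm (y - y')"
    and \<eta>_pos: "0 < \<eta>"
    and \<theta>_exponential: "\<And>s i. distributed M lborel (\<lambda>\<omega>. \<theta> s \<omega> $ i) (exponential_density \<eta>)"
    and \<theta>_indep: "indep_vars (\<lambda>_. borel) (\<lambda>(s, i) \<omega>. \<theta> s \<omega> $ i) UNIV"
    and minimax: "\<And>s u. is_global_minimax (\<lambda>x y. (\<Sum>n\<in>{1..<s}. L n x y) - inner u x) X Y (xs s u) (ys s u)"
    and xs_measurable: "\<And>s. xs s \<in> borel_measurable borel"
    and ys_measurable: "\<And>s. ys s \<in> borel_measurable borel"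
begin

definition cumulative :: "nat \<Rightarrow> real^'d \<Rightarrow> real^'i \<Rightarrow> real" where
  "cumulative s x y = (\<Sum>n\<in>{1..<s}. L n x y)"

definition leader_value :: "nat \<Rightarrow> real^'d \<Rightarrow> real" where
  "leader_value s u = cumulative s (xs s u) (ys s u) - inner u (xs s u)"

definition minimax_value :: "nat \<Rightarrow> real" where
  "minimax_value s = (INF x\<in>X. SUP y\<in>Y. cumulative s x y)"

(* The index 0 is arbitrary: all theta s have the same law (integral_leader_value). *)
definition expected_leader_value :: "nat \<Rightarrow> real" where
  "expected_leader_value s = (\<integral>\<omega>. leader_value s (\<theta> 0 \<omega>) \<partial>M)"

abbreviation xt :: "nat \<Rightarrow> 'w \<Rightarrow> real^'d" where
  "xt s \<omega> \<equiv> xs s (\<theta> s \<omega>)"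

abbreviation yt :: "nat \<Rightarrow> 'w \<Rightarrow> real^'i" where
  "yt s \<omega> \<equiv> ys s (\<theta> s \<omega>)"

abbreviation xmax :: real where
  "xmax \<equiv> SUP x\<in>X. l1norm x"

lemma minimax_cumulative:
  "is_global_minimax (\<lambda>x y. cumulative s x y - inner u x) X Y (xs s u) (ys s u)"
  using minimax unfolding cumulative_def .

lemma xs_in_X: "xs s u \<in> X" and ys_in_Y: "ys s u \<in> Y"
  using minimax[of s u] unfolding is_global_minimax_def by auto

lemma cumulative_Suc: "1 \<le> n \<Longrightarrow> cumulative (Suc n) x y = cumulative n x y + L n x y"
  unfolding cumulative_def by simp

lemma l1norm_le_xmax: "x \<in> X \<Longrightarrow> l1norm x \<le> xmax"
  using compact_X
  by (intro cSUP_upper bounded_imp_bdd_above compact_imp_bounded compact_continuous_image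
      continuous_intros continuous_on_id)

lemma xmax_nonneg: "0 \<le> xmax"
  using l1norm_le_xmax[OF xs_in_X] l1norm_nonneg order_trans by blast

lemma continuous_on_loss: "1 \<le> n \<Longrightarrow> continuous_on (X \<times> Y) (\<lambda>p. L n (fst p) (snd p))"
  using lipschitz_x lipschitz_y G_nonneg by (intro separately_lipschitz_continuous_on)

lemma continuous_on_cumulative: "continuous_on (X \<times> Y) (\<lambda>p. cumulative s (fst p) (snd p))"
  unfolding cumulative_def using continuous_on_loss by (intro continuous_on_sum) auto

lemma bdd_above_cumulative:
  assumes "x \<in> X" shows "bdd_above (cumulative s x ` Y)"
proof -
  have "bdd_above ((\<lambda>p. cumulative s (fst p) (snd p)) ` (X \<times> Y))"
    using compact_X compact_Y continuous_on_cumulative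
    by (intro bounded_imp_bdd_above compact_imp_bounded compact_continuous_image compact_Times)
  then show ?thesis
    by (rule bdd_above_mono) (use assms in force)
qed

lemma leader_value_increment:
  assumes "1 \<le> n"
  shows "is_argmax_on (cumulative n (xs (n + 1) u)) Y y \<Longrightarrow>
      L n (xs (n + 1) u) y \<le> leader_value (n + 1) u - leader_value n u"
    and "is_argmax_on (cumulative (n + 1) (xs n u)) Y y \<Longrightarrow>
      leader_value (n + 1) u - leader_value n u \<le> L n (xs n u) y"
proof -
  have "is_global_minimax (\<lambda>x y. (cumulative n x y - inner u x) + L n x y) X Y (xs (Suc n) u) (ys (Suc n) u)"
    using minimax_cumulative[of "Suc n" u] unfolding cumulative_Suc[OF assms] by (simp only: diff_add_eq)
  note increment = global_minimax_value_increment[OF minimax_cumulative[of n u] this]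
  show "L n (xs (n + 1) u) y \<le> leader_value (n + 1) u - leader_value n u"
    if "is_argmax_on (cumulative n (xs (n + 1) u)) Y y"
    using increment(1)[of y] that
    by (simp add: leader_value_def cumulative_Suc[OF assms] is_argmax_on_diff_const)
  show "leader_value (n + 1) u - leader_value n u \<le> L n (xs n u) y"
    if "is_argmax_on (cumulative (n + 1) (xs n u)) Y y"
  proof -
    have "is_argmax_on (\<lambda>y. cumulative n (xs n u) y - inner u (xs n u) + L n (xs n u) y) Y y"
      using that by (auto simp: is_argmax_on_def cumulative_Suc[OF assms])
    from increment(2)[OF this] show ?thesis
      unfolding leader_value_def Suc_eq_plus1[symmetric] cumulative_Suc[OF assms]
      by linarith
  qed
qed

lemma leader_value_approx:
  assumes "\<And>i. \<bar>u $ i\<bar> \<le> r"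
  shows "\<bar>leader_value s u - leader_value 1 u - minimax_value s\<bar> \<le> 2 * r * xmax"
proof -
  have r: "0 \<le> r" using assms[of undefined] by linarith
  have inner: "\<bar>inner u x\<bar> \<le> r * xmax" if "x \<in> X" for x
    using abs_inner_le_l1norm[OF assms, of x] l1norm_le_xmax[OF that] r
    by (meson mult_left_mono order_trans)
  have "\<bar>leader_value s u - minimax_value s\<bar> \<le> r * xmax"
    unfolding leader_value_def minimax_value_def
    using inner bdd_above_cumulative
    by (intro global_minimax_value_approx[OF minimax_cumulative]) auto
  moreover have "\<bar>leader_value 1 u\<bar> \<le> r * xmax"
    using inner[OF xs_in_X] by (simp add: leader_value_def cumulative_def)
  ultimately show ?thesis by linarith
qed

lemma loss_le_leader_increment:
  assumes n: "1 \<le> n" and y: "is_argmax_on (cumulative n (xs (n + 1) u)) Y y"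
  shows "L n (xs (n + 1) u) (ys (n + 1) u)
    \<le> leader_value (n + 1) u - leader_value n u + G * l1norm (y - ys (n + 1) u)"
proof -
  have "y \<in> Y" using y by (simp add: is_argmax_on_def)
  then have "\<bar>L n (xs (n + 1) u) (ys (n + 1) u) - L n (xs (n + 1) u) y\<bar> \<le> G * l1norm (y - ys (n + 1) u)"
    using lipschitz_y[OF n xs_in_X ys_in_Y] l1norm_minus_commute by metis
  with leader_value_increment(1)[OF n y] show ?thesis by linarith
qed

lemma leader_increment_le_loss:
  assumes n: "1 \<le> n" and y: "is_argmax_on (cumulative (n + 1) (xs n u)) Y y"
  shows "leader_value (n + 1) u - leader_value n u
      - G * l1norm (xs n u - xs (n + 1) v) - G * l1norm (y - ys (n + 1) v)
    \<le> L n (xs (n + 1) v) (ys (n + 1) v)"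
proof -
  have "y \<in> Y" using y by (simp add: is_argmax_on_def)
  then have "\<bar>L n (xs n u) (ys (n + 1) v) - L n (xs n u) y\<bar> \<le> G * l1norm (y - ys (n + 1) v)"
    using lipschitz_y[OF n xs_in_X ys_in_Y] l1norm_minus_commute by metis
  moreover have "\<bar>L n (xs (n + 1) v) (ys (n + 1) v) - L n (xs n u) (ys (n + 1) v)\<bar>
      \<le> G * l1norm (xs n u - xs (n + 1) v)"
    using lipschitz_x[OF n xs_in_X xs_in_X ys_in_Y] l1norm_minus_commute by metis
  ultimately show ?thesis
    using leader_value_increment(2)[OF n y] by linarith
qed

lemma \<theta>_measurable: "\<theta> s \<in> borel_measurable M"
  using distributed_measurable[OF \<theta>_exponential] by (intro borel_measurable_vec) simp

lemma xt_measurable: "xt s \<in> borel_measurable M"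
  by (rule measurable_compose[OF \<theta>_measurable xs_measurable])

lemma yt_measurable: "yt s \<in> borel_measurable M"
  by (rule measurable_compose[OF \<theta>_measurable ys_measurable])

lemma integrable_loss:
  assumes "1 \<le> n" shows "integrable M (\<lambda>\<omega>. L n (xt k \<omega>) (yt k \<omega>))"
  using integrable_continuous_on_comp[OF compact_Times[OF compact_X compact_Y] continuous_on_loss[OF assms]
      borel_measurable_Pair[OF xt_measurable yt_measurable]]
  by (simp add: xs_in_X ys_in_Y)

lemma integrable_xt_dist: "integrable M (\<lambda>\<omega>. l1norm (xt n \<omega> - xt (n + 1) \<omega>))"
  by (rule integrable_l1norm_diff[OF compact_X xt_measurable xt_measurable xs_in_X xs_in_X])

lemma integrable_yt_dist:
  "y \<in> borel_measurable M \<Longrightarrow> (\<And>\<omega>. y \<omega> \<in> Y) \<Longrightarrow> integrable M (\<lambda>\<omega>. l1norm (y \<omega> - yt n \<omega>))"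
  by (rule integrable_l1norm_diff[OF compact_Y _ yt_measurable _ ys_in_Y])

lemma borel_measurable_leader_value: "leader_value s \<in> borel_measurable borel"
proof -
  have "(\<lambda>u. cumulative s (xs s u) (ys s u)) \<in> borel_measurable borel"
    using borel_measurable_continuous_on_comp[OF continuous_on_cumulative
        borel_measurable_Pair[OF xs_measurable ys_measurable]]
    by (simp add: xs_in_X ys_in_Y)
  moreover have "(\<lambda>u. inner u (xs s u)) \<in> borel_measurable borel"
    using xs_measurable by measurable
  ultimately show ?thesis
    unfolding leader_value_def[abs_def] by measurable
qed

lemma integrable_leader_value: "integrable M (\<lambda>\<omega>. leader_value s (\<theta> k \<omega>))"
proof -
  define a where "a = ln CARD('d) / \<eta>"
  have "integrable M (\<lambda>\<omega>. cumulative s (xs s (\<theta> k \<omega>)) (ys s (\<theta> k \<omega>)))"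
    using integrable_continuous_on_comp[OF compact_Times[OF compact_X compact_Y] continuous_on_cumulative
        borel_measurable_Pair[OF measurable_compose[OF \<theta>_measurable xs_measurable]
          measurable_compose[OF \<theta>_measurable ys_measurable]]]
    by (simp add: xs_in_X ys_in_Y)
  moreover have "integrable M (\<lambda>\<omega>. inner (\<theta> k \<omega>) (xs s (\<theta> k \<omega>)))"
  proof (rule Bochner_Integration.integrable_bound)
    show "integrable M (\<lambda>\<omega>. xmax * sup_bound a (\<theta> k \<omega>))"
      unfolding a_def using exponential_sup_bound(1)[OF \<theta>_exponential \<eta>_pos] by simp
    show "(\<lambda>\<omega>. inner (\<theta> k \<omega>) (xs s (\<theta> k \<omega>))) \<in> borel_measurable M"
      using \<theta>_measurable xs_measurable by measurable
    show "AE \<omega> in M. norm (inner (\<theta> k \<omega>) (xs s (\<theta> k \<omega>))) \<le> norm (xmax * sup_bound a (\<theta> k \<omega>))"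
    proof (rule AE_I2)
      fix \<omega>
      have "0 \<le> sup_bound a (\<theta> k \<omega>)"
        using abs_nth_le_sup_bound abs_ge_zero order_trans by blast
      then have "\<bar>inner (\<theta> k \<omega>) (xs s (\<theta> k \<omega>))\<bar> \<le> sup_bound a (\<theta> k \<omega>) * xmax"
        using abs_inner_le_l1norm[OF abs_nth_le_sup_bound] l1norm_le_xmax[OF xs_in_X]
        by (meson mult_left_mono order_trans)
      then show "norm (inner (\<theta> k \<omega>) (xs s (\<theta> k \<omega>))) \<le> norm (xmax * sup_bound a (\<theta> k \<omega>))"
        by (simp add: mult.commute)
    qed
  qed
  ultimately show ?thesis
    unfolding leader_value_def by (rule Bochner_Integration.integrable_diff)
qed

lemma integral_leader_value: "(\<integral>\<omega>. leader_value s (\<theta> k \<omega>) \<partial>M) = expected_leader_value s"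
  unfolding expected_leader_value_def
  by (rule integral_iid_vec_eq[OF \<theta>_exponential \<theta>_indep borel_measurable_leader_value])

lemma expected_loss_le:
  assumes n: "1 \<le> n"
    and y: "\<And>\<omega>. is_argmax_on (cumulative n (xt (n + 1) \<omega>)) Y (y \<omega>)" "y \<in> borel_measurable M"
  shows "(\<integral>\<omega>. L n (xt (n + 1) \<omega>) (yt (n + 1) \<omega>) \<partial>M)
    \<le> expected_leader_value (n + 1) - expected_leader_value n
      + G * (\<integral>\<omega>. l1norm (y \<omega> - yt (n + 1) \<omega>) \<partial>M)"
proof -
  have dist: "integrable M (\<lambda>\<omega>. l1norm (y \<omega> - yt (n + 1) \<omega>))"
    using y by (intro integrable_yt_dist) (auto simp: is_argmax_on_def)
  have "(\<integral>\<omega>. L n (xt (n + 1) \<omega>) (yt (n + 1) \<omega>) \<partial>M)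
    \<le> (\<integral>\<omega>. leader_value (n + 1) (\<theta> (n + 1) \<omega>) - leader_value n (\<theta> (n + 1) \<omega>)
          + G * l1norm (y \<omega> - yt (n + 1) \<omega>) \<partial>M)"
    using loss_le_leader_increment[OF n y(1)] integrable_loss[OF n] integrable_leader_value dist
    by (intro integral_mono) auto
  also have "\<dots> = expected_leader_value (n + 1) - expected_leader_value n
      + G * (\<integral>\<omega>. l1norm (y \<omega> - yt (n + 1) \<omega>) \<partial>M)"
    using integrable_leader_value dist by (simp add: integral_leader_value)
  finally show ?thesis .
qed

lemma expected_loss_ge:
  assumes n: "1 \<le> n"
    and y: "\<And>\<omega>. is_argmax_on (cumulative (n + 1) (xt n \<omega>)) Y (y \<omega>)" "y \<in> borel_measurable M"
  shows "expected_leader_value (n + 1) - expected_leader_value n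
      - G * (\<integral>\<omega>. l1norm (xt n \<omega> - xt (n + 1) \<omega>) \<partial>M)
      - G * (\<integral>\<omega>. l1norm (y \<omega> - yt (n + 1) \<omega>) \<partial>M)
    \<le> (\<integral>\<omega>. L n (xt (n + 1) \<omega>) (yt (n + 1) \<omega>) \<partial>M)"
proof -
  have dist: "integrable M (\<lambda>\<omega>. l1norm (y \<omega> - yt (n + 1) \<omega>))"
    using y by (intro integrable_yt_dist) (auto simp: is_argmax_on_def)
  have "expected_leader_value (n + 1) - expected_leader_value n
      - G * (\<integral>\<omega>. l1norm (xt n \<omega> - xt (n + 1) \<omega>) \<partial>M)
      - G * (\<integral>\<omega>. l1norm (y \<omega> - yt (n + 1) \<omega>) \<partial>M)
    = (\<integral>\<omega>. leader_value (n + 1) (\<theta> n \<omega>) - leader_value n (\<theta> n \<omega>)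
          - G * l1norm (xt n \<omega> - xt (n + 1) \<omega>) - G * l1norm (y \<omega> - yt (n + 1) \<omega>) \<partial>M)"
    using integrable_leader_value integrable_xt_dist dist by (simp add: integral_leader_value)
  also have "\<dots> \<le> (\<integral>\<omega>. L n (xt (n + 1) \<omega>) (yt (n + 1) \<omega>) \<partial>M)"
    using leader_increment_le_loss[OF n y(1)] integrable_loss[OF n] integrable_leader_value
      integrable_xt_dist dist
    by (intro integral_mono) auto
  finally show ?thesis .
qed

lemma sum_expected_leader_increments:
  "\<bar>(\<Sum>n\<in>{1..<t}. expected_leader_value (n + 1) - expected_leader_value n) - minimax_value t\<bar>
    \<le> 2 * ((ln CARD('d) + 1) / \<eta>) * xmax"
proof (cases "t = 0")
  case True
  have "X \<noteq> {}" "Y \<noteq> {}" using xs_in_X ys_in_Y by auto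
  then have "minimax_value 0 = 0"
    by (simp add: minimax_value_def cumulative_def)
  then show ?thesis
    using True xmax_nonneg \<eta>_pos by simp
next
  case False
  define a where "a = ln CARD('d) / \<eta>"
  note sup_bound = exponential_sup_bound[OF \<theta>_exponential \<eta>_pos, of 0, folded a_def]
  define f where "f \<omega> = leader_value t (\<theta> 0 \<omega>) - leader_value 1 (\<theta> 0 \<omega>) - minimax_value t" for \<omega>
  have "(\<Sum>n\<in>{1..<t}. expected_leader_value (n + 1) - expected_leader_value n)
      = expected_leader_value t - expected_leader_value 1"
    using False sum_Suc_diff'[of 1 t expected_leader_value] by simp
  also have "\<dots> - minimax_value t = (\<integral>\<omega>. f \<omega> \<partial>M)"
    unfolding f_def expected_leader_value_def using integrable_leader_value
    by (simp add: Bochner_Integration.integral_diff prob_space)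
  finally have sum_eq: "(\<Sum>n\<in>{1..<t}. expected_leader_value (n + 1) - expected_leader_value n)
      - minimax_value t = (\<integral>\<omega>. f \<omega> \<partial>M)" .
  have "\<bar>\<integral>\<omega>. f \<omega> \<partial>M\<bar> \<le> (\<integral>\<omega>. \<bar>f \<omega>\<bar> \<partial>M)"
    by (rule integral_abs_bound)
  also have "\<dots> \<le> (\<integral>\<omega>. 2 * sup_bound a (\<theta> 0 \<omega>) * xmax \<partial>M)"
    unfolding f_def using leader_value_approx[OF abs_nth_le_sup_bound] integrable_leader_value sup_bound(1)
    by (intro integral_mono) auto
  also have "\<dots> = 2 * ((ln CARD('d) + 1) / \<eta>) * xmax"
    using sup_bound by simp
  finally show ?thesis unfolding sum_eq .
qed

lemma integral_regret:
  "(\<integral>\<omega>. (\<Sum>n\<in>{1..<t}. L n (xt (n + 1) \<omega>) (yt (n + 1) \<omega>)) - minimax_value t \<partial>M)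
    = (\<Sum>n\<in>{1..<t}. \<integral>\<omega>. L n (xt (n + 1) \<omega>) (yt (n + 1) \<omega>) \<partial>M) - minimax_value t"
proof -
  have loss: "integrable M (\<lambda>\<omega>. L n (xt (n + 1) \<omega>) (yt (n + 1) \<omega>))" if "n \<in> {1..<t}" for n
    using that by (intro integrable_loss) auto
  have "integrable M (\<lambda>\<omega>. \<Sum>n\<in>{1..<t}. L n (xt (n + 1) \<omega>) (yt (n + 1) \<omega>))"
    using loss by (rule Bochner_Integration.integrable_sum)
  then have "(\<integral>\<omega>. (\<Sum>n\<in>{1..<t}. L n (xt (n + 1) \<omega>) (yt (n + 1) \<omega>)) - minimax_value t \<partial>M)
      = (\<integral>\<omega>. (\<Sum>n\<in>{1..<t}. L n (xt (n + 1) \<omega>) (yt (n + 1) \<omega>)) \<partial>M) - minimax_value t"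
    by (simp add: Bochner_Integration.integral_diff prob_space)
  also have "(\<integral>\<omega>. (\<Sum>n\<in>{1..<t}. L n (xt (n + 1) \<omega>) (yt (n + 1) \<omega>)) \<partial>M)
      = (\<Sum>n\<in>{1..<t}. \<integral>\<omega>. L n (xt (n + 1) \<omega>) (yt (n + 1) \<omega>) \<partial>M)"
    using loss by (rule Bochner_Integration.integral_sum)
  finally show ?thesis .
qed

theorem expected_regret_ge:
  assumes "\<And>n \<omega>. is_argmax_on (cumulative (n + 1) (xt n \<omega>)) Y (y' n \<omega>)"
    and "\<And>n. y' n \<in> borel_measurable M"
  shows "- G * (\<Sum>n\<in>{1..<t}. \<integral>\<omega>. l1norm (xt n \<omega> - xt (n + 1) \<omega>) \<partial>M)
      - G * (\<Sum>n\<in>{1..<t}. \<integral>\<omega>. l1norm (y' n \<omega> - yt (n + 1) \<omega>) \<partial>M)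
      - 2 * ((ln CARD('d) + 1) / \<eta>) * xmax
    \<le> (\<integral>\<omega>. (\<Sum>n\<in>{1..<t}. L n (xt (n + 1) \<omega>) (yt (n + 1) \<omega>)) - minimax_value t \<partial>M)"
proof -
  have "(\<Sum>n\<in>{1..<t}. expected_leader_value (n + 1) - expected_leader_value n
      - G * (\<integral>\<omega>. l1norm (xt n \<omega> - xt (n + 1) \<omega>) \<partial>M)
      - G * (\<integral>\<omega>. l1norm (y' n \<omega> - yt (n + 1) \<omega>) \<partial>M))
    \<le> (\<Sum>n\<in>{1..<t}. \<integral>\<omega>. L n (xt (n + 1) \<omega>) (yt (n + 1) \<omega>) \<partial>M)"
    using assms by (intro sum_mono expected_loss_ge) auto
  then show ?thesis
    using sum_expected_leader_increments[of t]
    unfolding integral_regret sum_subtractf sum_distrib_left[symmetric] mult_minus_left by linarith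
qed

theorem expected_regret_le:
  assumes "\<And>n \<omega>. is_argmax_on (cumulative n (xt (n + 1) \<omega>)) Y (y'' n \<omega>)"
    and "\<And>n. y'' n \<in> borel_measurable M"
  shows "(\<integral>\<omega>. (\<Sum>n\<in>{1..<t}. L n (xt (n + 1) \<omega>) (yt (n + 1) \<omega>)) - minimax_value t \<partial>M)
    \<le> G * (\<Sum>n\<in>{1..<t}. \<integral>\<omega>. l1norm (y'' n \<omega> - yt (n + 1) \<omega>) \<partial>M)
      + 2 * ((ln CARD('d) + 1) / \<eta>) * xmax"
proof -
  have "(\<Sum>n\<in>{1..<t}. \<integral>\<omega>. L n (xt (n + 1) \<omega>) (yt (n + 1) \<omega>) \<partial>M)
    \<le> (\<Sum>n\<in>{1..<t}. expected_leader_value (n + 1) - expected_leader_value n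
      + G * (\<integral>\<omega>. l1norm (y'' n \<omega> - yt (n + 1) \<omega>) \<partial>M))"
    using assms by (intro sum_mono expected_loss_le) auto
  then show ?thesis
    using sum_expected_leader_increments[of t]
    unfolding integral_regret sum.distrib sum_distrib_left[symmetric] by linarith
qed

end

theorem lemma3:
  fixes X :: "(real ^ 'd::finite) set"
    and f :: "nat \<Rightarrow> real^'d \<Rightarrow> real"
    and c :: "nat \<Rightarrow> 'i::finite \<Rightarrow> real^'d \<Rightarrow> real"
    and b :: "'i \<Rightarrow> real"
    and lam ymax G0 G :: real
    and T :: nat
    and M :: "'w measure"
    and \<theta> :: "nat \<Rightarrow> 'w \<Rightarrow> real^'d"
    and xs :: "nat \<Rightarrow> real^'d \<Rightarrow> real^'d"
    and ys :: "nat \<Rightarrow> real^'d \<Rightarrow> real^'i"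
    and yp ypp :: "nat \<Rightarrow> 'w \<Rightarrow> real^'i"
    and t :: nat
  assumes X: "compact X" "X \<noteq> {}"
    and lipf: "\<And>n x x'. x \<in> X \<Longrightarrow> x' \<in> X \<Longrightarrow> \<bar>f n x - f n x'\<bar> \<le> G0 * l1norm (x - x')"
    and lipc: "\<And>n i x x'. x \<in> X \<Longrightarrow> x' \<in> X \<Longrightarrow> \<bar>c n i x - c n i x'\<bar> \<le> G0 * l1norm (x - x')"
    and b: "\<And>i. b i \<ge> 0"
    and lam: "lam > 0" and ymax: "ymax > 0"
    and G: "G > 0"
    and Gx: "\<And>n x x' y. n \<ge> 1 \<Longrightarrow> x \<in> X \<Longrightarrow> x' \<in> X \<Longrightarrow> y \<in> Ybox ymax \<Longrightarrow>
               \<bar>Lbar f c b lam n x y - Lbar f c b lam n x' y\<bar> \<le> G * l1norm (x - x')"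
    and Gy: "\<And>n x y y'. n \<ge> 1 \<Longrightarrow> x \<in> X \<Longrightarrow> y \<in> Ybox ymax \<Longrightarrow> y' \<in> Ybox ymax \<Longrightarrow>
               \<bar>Lbar f c b lam n x y - Lbar f c b lam n x y'\<bar> \<le> G * l1norm (y - y')"
    and T: "T \<ge> 1"
    and P: "prob_space M"
    and \<theta>_exp: "\<And>s i. distributed M lborel (\<lambda>\<omega>. \<theta> s \<omega> $ i)
                     (exponential_density (real T powr (-2/3)))"
    and \<theta>_indep: "prob_space.indep_vars M (\<lambda>_. borel) (\<lambda>(s, i) \<omega>. \<theta> s \<omega> $ i) UNIV"
    and minimax: "\<And>s v. is_global_minimax
               (\<lambda>x y. (\<Sum>n\<in>{1..<s}. Lbar f c b lam n x y) - inner v x) X (Ybox ymax) (xs s v) (ys s v)"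
    and xs_meas: "\<And>s. xs s \<in> borel_measurable borel"
    and ys_meas: "\<And>s. ys s \<in> borel_measurable borel"
    and yp_def: "\<And>s \<omega>. is_argmax_on
               (\<lambda>y. (\<Sum>n\<in>{1..<s+1}. Lbar f c b lam n (xs s (\<theta> s \<omega>)) y) - inner (\<theta> (s+1) \<omega>) (xs s (\<theta> s \<omega>)))
               (Ybox ymax) (yp s \<omega>)"
    and ypp_def: "\<And>s \<omega>. is_argmax_on
               (\<lambda>y. (\<Sum>n\<in>{1..<s}. Lbar f c b lam n (xs (s+1) (\<theta> (s+1) \<omega>)) y) - inner (\<theta> s \<omega>) (xs (s+1) (\<theta> (s+1) \<omega>)))
               (Ybox ymax) (ypp s \<omega>)"
    and yp_meas: "\<And>s. yp s \<in> borel_measurable M"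
    and ypp_meas: "\<And>s. ypp s \<in> borel_measurable M"
  shows
   "(\<integral>\<omega>. (\<Sum>n\<in>{1..<t}. Lbar f c b lam n (xs (n+1) (\<theta> (n+1) \<omega>)) (ys (n+1) (\<theta> (n+1) \<omega>)))
          - (INF x\<in>X. SUP y\<in>Ybox ymax. \<Sum>n\<in>{1..<t}. Lbar f c b lam n x y) \<partial>M)
      \<ge> - G * (\<Sum>n\<in>{1..<t}. \<integral>\<omega>. l1norm (xs n (\<theta> n \<omega>) - xs (n+1) (\<theta> (n+1) \<omega>)) \<partial>M)
        - G * (\<Sum>n\<in>{1..<t}. \<integral>\<omega>. l1norm (yp n \<omega> - ys (n+1) (\<theta> (n+1) \<omega>)) \<partial>M)
        - 2 * real T powr (2/3) * (ln (real CARD('d)) + 1) * (SUP x\<in>X. l1norm x)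
    \<and> (\<integral>\<omega>. (\<Sum>n\<in>{1..<t}. Lbar f c b lam n (xs (n+1) (\<theta> (n+1) \<omega>)) (ys (n+1) (\<theta> (n+1) \<omega>)))
          - (INF x\<in>X. SUP y\<in>Ybox ymax. \<Sum>n\<in>{1..<t}. Lbar f c b lam n x y) \<partial>M)
      \<le> G * (\<Sum>n\<in>{1..<t}. \<integral>\<omega>. l1norm (ypp n \<omega> - ys (n+1) (\<theta> (n+1) \<omega>)) \<partial>M)
        + 2 * real T powr (2/3) * (ln (real CARD('d)) + 1) * (SUP x\<in>X. l1norm x)"
proof -
  \<comment> \<open>Only the Lipschitz bounds Gx and Gy on Lbar enter.\<close>
  interpret perturbed_leader M X "Ybox ymax" "Lbar f c b lam" G "real T powr (-2/3)" \<theta> xs ys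
    using P X(1) compact_Ybox G Gx Gy T \<theta>_exp \<theta>_indep minimax xs_meas ys_meas
    by (intro perturbed_leader.intro perturbed_leader_axioms.intro) auto
  have yp: "is_argmax_on (cumulative (n + 1) (xt n \<omega>)) (Ybox ymax) (yp n \<omega>)" for n \<omega>
    using yp_def[of n \<omega>] by (simp add: cumulative_def[abs_def] is_argmax_on_diff_const)
  have ypp: "is_argmax_on (cumulative n (xt (n + 1) \<omega>)) (Ybox ymax) (ypp n \<omega>)" for n \<omega>
    using ypp_def[of n \<omega>] by (simp add: cumulative_def[abs_def] is_argmax_on_diff_const)
  have "2 * ((ln CARD('d) + 1) / real T powr (-2/3)) * xmax
      = 2 * real T powr (2/3) * (ln CARD('d) + 1) * xmax"
    by (simp add: powr_minus_divide)
  with expected_regret_ge[OF yp yp_meas, of t] expected_regret_le[OF ypp ypp_meas, of t]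
  show ?thesis
    unfolding minimax_value_def cumulative_def by simp
qed

end
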